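(* Let $0<d\le 1$ and $0<\varepsilon<1/12$ be real numbers, and let $G$ be a balanced bipartite graph on $n$ vertices with (bipartite) density $d_G$, where $$n> \exp\!\big(10 \log (1/d)\, \log (1/\varepsilon)/\varepsilon^2\big).$$ Then the edge set of $G$ can be written as an edge-disjoint union $$E(G)=E(H_0)\cup E(H_1)\cup\dots\cup E(H_K),$$ where $H_0,H_1,\dots,H_K$ are balanced bipartite subgraphs of $G$ such that: for every $1\le i\le K$, $H_i$ is an $(\varepsilon, d-\varepsilon)$-super-regular pair with bipartite density at least $d$ and with at least $m$ vertices in each of its two parts, where $$m \ge d^{(10/\varepsilon^2)\log (1/\varepsilon)}\, n/2;$$ $H_0$ has bipartite density less than $d$; and $$K \le 2d_G \cdot d^{-(20/\varepsilon^2)\log (1/\varepsilon)}/d .$$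
   Context: All graphs are simple; $\log$ denotes the natural logarithm. A bipartite graph is balanced if its two parts have equal size. For a bipartite graph with parts $A,B$ (or disjoint vertex sets $A,B$ in a graph), $e(A,B)$ is the number of edges between $A$ and $B$ and the (bipartite) density is $d(A,B)=e(A,B)/(|A|\,|B|)$; for a bipartite graph "density" means this bipartite density between its two parts. A bipartite graph $H=(A,B;E)$ is $\varepsilon$-regular if $|d(A,B)-d(X,Y)|\le\varepsilon$ for all $X\subseteq A$, $Y\subseteq B$ with $|X|\ge\varepsilon|A|$, $|Y|\ge\varepsilon|B|$. It is an $(\varepsilon,\delta)$-super-regular pair if it is $\varepsilon$-regular, every vertex of $A$ has at least $\delta|B|$ neighbours in $B$, and every vertex of $B$ has at least $\delta|A|$ neighbours in $A$. *)

theory Defs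
  imports Complex_Main
begin

text \<open>A bipartite graph with parts X, Y is represented by an edge set
  E of ordered pairs (x,y) with x in X and y in Y (only pairs in X \<times> Y count).\<close>

definition bip_density :: "'a set \<Rightarrow> 'a set \<Rightarrow> ('a \<times> 'a) set \<Rightarrow> real" where
  "bip_density X Y E = real (card (E \<inter> (X \<times> Y))) / (real (card X) * real (card Y))"

definition eps_regular :: "real \<Rightarrow> 'a set \<Rightarrow> 'a set \<Rightarrow> ('a \<times> 'a) set \<Rightarrow> bool" where
  "eps_regular \<epsilon> X Y E \<longleftrightarrow>
     (\<forall>X' Y'. X' \<subseteq> X \<longrightarrow> Y' \<subseteq> Y \<longrightarrow> real (card X') \<ge> \<epsilon> * real (card X)
        \<longrightarrow> real (card Y') \<ge> \<epsilon> * real (card Y)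
        \<longrightarrow> \<bar>bip_density X Y E - bip_density X' Y' E\<bar> \<le> \<epsilon>)"

definition super_regular :: "real \<Rightarrow> real \<Rightarrow> 'a set \<Rightarrow> 'a set \<Rightarrow> ('a \<times> 'a) set \<Rightarrow> bool" where
  "super_regular \<epsilon> \<delta> X Y E \<longleftrightarrow>
     eps_regular \<epsilon> X Y E \<and>
     (\<forall>x\<in>X. real (card {y\<in>Y. (x, y) \<in> E}) \<ge> \<delta> * real (card Y)) \<and>
     (\<forall>y\<in>Y. real (card {x\<in>X. (x, y) \<in> E}) \<ge> \<delta> * real (card X))"

definition balanced_bip_subgraph ::
  "'a set \<Rightarrow> 'a set \<Rightarrow> ('a \<times> 'a) set \<Rightarrow> 'a set \<Rightarrow> 'a set \<Rightarrow> ('a \<times> 'a) set \<Rightarrow> bool" where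
  "balanced_bip_subgraph X' Y' F A B E \<longleftrightarrow>
     X' \<subseteq> A \<and> Y' \<subseteq> B \<and> card X' = card Y' \<and> F \<subseteq> E \<inter> (X' \<times> Y')"

end

theory Submission
  imports Defs "HOL-Analysis.Convex" "HOL-Library.Disjoint_Sets"
begin

(* Fix \<gamma> = \<epsilon>\<^sup>2 / (10 ln (1/\<epsilon>)) and consider the potential d(X,Y) min(|X|,|Y|)^\<gamma> of pairs of
   nonempty sets X \<subseteq> A, Y \<subseteq> B.  A maximiser can be taken balanced, and maximality makes it
   super-regular: a dense subpair of linear size would have larger potential, removing a vertex of
   low degree would increase the potential, and a sparse subpair X' \<times> Y' forces one of the
   complementary pairs (X - X') \<times> Y or X' \<times> (Y - Y') to have too large potential.  Comparing with
   the potential of (A,B) shows that the maximiser has density at least d and at least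
   d^(1/\<gamma>) |A| vertices on each side.  Removing its edges and repeating until the density of the
   remaining graph drops below d gives the decomposition; every removed pair carries at least
   d (d^(1/\<gamma>) |A|)\<^sup>2 edges, which bounds K. *)

section \<open>Inequalities for real powers\<close>

lemma mult_powr_le_affine:
  fixes u k \<gamma> :: real
  assumes "0 \<le> u" "u \<le> k" "0 \<le> \<gamma>" "\<gamma> \<le> 1"
  shows "u * (k / u) powr \<gamma> \<le> u + \<gamma> * (k - u)"
proof (cases "u = 0")
  case True
  then show ?thesis using assms by simp
next
  case False
  then have "0 < u" "0 < k" using assms by auto
  then have "u * (k / u) powr \<gamma> = u powr (1 - \<gamma>) * k powr \<gamma>"
    by (simp add: powr_divide powr_diff)
  also have "\<dots> \<le> (1 - \<gamma>) * u + \<gamma> * k"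
    using Youngs_inequality_0[of "1 - \<gamma>" \<gamma> u k] assms \<open>0 < u\<close> \<open>0 < k\<close> by simp
  finally show ?thesis by (simp add: algebra_simps)
qed

lemma mult_min_powr_le:
  fixes x c k \<epsilon> \<gamma> :: real
  assumes "0 < \<epsilon>" "\<epsilon> \<le> 1" "\<epsilon> * k \<le> x" "x \<le> k" "0 \<le> c" "c \<le> k" "0 \<le> \<gamma>" "\<gamma> \<le> 1"
    and "\<gamma> * ln (1 / \<epsilon>) \<le> 1/2"
  shows "x * c * (k / min x c) powr \<gamma> \<le> x * c + \<gamma> * x * k * (1 + 2 * ln (1 / \<epsilon>))"
proof -
  have "0 \<le> \<epsilon> * k" using assms by simp
  then have "0 \<le> x" using assms by linarith
  have L: "0 \<le> ln (1 / \<epsilon>)" using assms by simp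
  show ?thesis
  proof (cases "c \<le> x")
    case True
    have "x * c * (k / min x c) powr \<gamma> = x * (c * (k / c) powr \<gamma>)"
      using True by simp
    also have "\<dots> \<le> x * (c + \<gamma> * (k - c))"
      using mult_powr_le_affine[of c k \<gamma>] assms \<open>0 \<le> x\<close> by (intro mult_left_mono) auto
    also have "\<dots> \<le> x * c + \<gamma> * x * k * 1"
      using assms \<open>0 \<le> x\<close> by (simp add: algebra_simps mult_left_mono)
    also have "\<dots> \<le> x * c + \<gamma> * x * k * (1 + 2 * ln (1 / \<epsilon>))"
      using assms \<open>0 \<le> x\<close> L by (intro add_left_mono mult_left_mono) auto
    finally show ?thesis .
  next
    case False
    show ?thesis
    proof (cases "x = 0")
      case True
      then show ?thesis by simp
    next
      case False
      then have "0 < x" using \<open>0 \<le> x\<close> by simp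
      have "(k / x) powr \<gamma> \<le> (1 / \<epsilon>) powr \<gamma>"
        using assms \<open>0 < x\<close> by (intro powr_mono2) (auto simp: field_simps)
      also have "\<dots> = exp (\<gamma> * ln (1 / \<epsilon>))"
        using assms by (simp add: powr_def)
      also have "\<dots> \<le> 1 + 2 * (\<gamma> * ln (1 / \<epsilon>))"
        using assms L by (intro real_exp_bound_lemma) auto
      finally have bound: "(k / x) powr \<gamma> \<le> 1 + 2 * (\<gamma> * ln (1 / \<epsilon>))" .
      have "x * c * (k / min x c) powr \<gamma> = x * c * (k / x) powr \<gamma>"
        using \<open>\<not> c \<le> x\<close> by simp
      also have "\<dots> \<le> x * c * (1 + 2 * (\<gamma> * ln (1 / \<epsilon>)))"
        using bound assms \<open>0 \<le> x\<close> by (intro mult_left_mono) auto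
      also have "\<dots> = x * c + 2 * \<gamma> * ln (1 / \<epsilon>) * x * c"
        by (simp add: algebra_simps)
      also have "\<dots> \<le> x * c + 2 * \<gamma> * ln (1 / \<epsilon>) * x * k"
        using assms \<open>0 \<le> x\<close> L by (intro add_left_mono mult_left_mono) auto
      also have "\<dots> \<le> x * c + \<gamma> * x * k * (1 + 2 * ln (1 / \<epsilon>))"
        using assms \<open>0 \<le> x\<close> by (simp add: algebra_simps)
      finally show ?thesis .
    qed
  qed
qed

lemma less_plus_mult_powr:
  fixes p \<epsilon> \<gamma> :: real
  assumes "0 \<le> p" "p \<le> 1" "0 < \<epsilon>" "\<epsilon> < 1" "\<gamma> * ln (1 / \<epsilon>) \<le> \<epsilon>\<^sup>2 / 2"
  shows "p < (p + \<epsilon>) * \<epsilon> powr \<gamma>"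
proof -
  have "\<epsilon> powr \<gamma> = exp (- (\<gamma> * ln (1 / \<epsilon>)))"
    using assms by (simp add: powr_def ln_div)
  also have "\<dots> \<ge> 1 - \<epsilon>\<^sup>2 / 2"
    using exp_ge_add_one_self[of "- (\<gamma> * ln (1 / \<epsilon>))"] assms by linarith
  finally have "(p + \<epsilon>) * (1 - \<epsilon>\<^sup>2 / 2) \<le> (p + \<epsilon>) * \<epsilon> powr \<gamma>"
    using assms by (intro mult_left_mono) auto
  moreover have "(p + \<epsilon>) * \<epsilon> * \<epsilon> < 2 * \<epsilon>"
  proof -
    have "(p + \<epsilon>) * \<epsilon> \<le> p + \<epsilon>"
      using mult_left_mono[of \<epsilon> 1 "p + \<epsilon>"] assms by simp
    then have "(p + \<epsilon>) * \<epsilon> < 2" using assms by linarith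
    then show ?thesis using mult_strict_right_mono assms(3) by blast
  qed
  moreover have "(p + \<epsilon>) * (1 - \<epsilon>\<^sup>2 / 2) = p + (\<epsilon> - (p + \<epsilon>) * \<epsilon> * \<epsilon> / 2)"
    by (simp add: algebra_simps power2_eq_square)
  ultimately show ?thesis by linarith
qed

lemma small_exponent_bounds:
  fixes \<epsilon> \<gamma> :: real
  assumes "0 < \<epsilon>" "\<epsilon> < 1" "0 \<le> \<gamma>" "2 * \<gamma> * (1 + ln (1 / \<epsilon>)) \<le> \<epsilon>\<^sup>2"
  shows "\<gamma> \<le> \<epsilon>" "\<gamma> * ln (1 / \<epsilon>) \<le> \<epsilon>\<^sup>2 / 2"
proof -
  have "0 \<le> \<gamma> * ln (1 / \<epsilon>)" using assms(1-3) by simp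
  moreover have "\<epsilon>\<^sup>2 \<le> \<epsilon>" using assms(1,2) by (simp add: power2_eq_square)
  moreover have "2 * \<gamma> * (1 + ln (1 / \<epsilon>)) = 2 * \<gamma> + 2 * (\<gamma> * ln (1 / \<epsilon>))"
    by (simp add: algebra_simps)
  ultimately show "\<gamma> \<le> \<epsilon>" "\<gamma> * ln (1 / \<epsilon>) \<le> \<epsilon>\<^sup>2 / 2" using assms(1,3,4) by linarith+
qed

section \<open>Edge counts and densities\<close>

definition edge_count :: "'a set \<Rightarrow> 'a set \<Rightarrow> ('a \<times> 'a) set \<Rightarrow> nat" where
  "edge_count X Y F = card (F \<inter> X \<times> Y)"

lemma bip_density_eq_edge_count:
  "bip_density X Y F = real (edge_count X Y F) / (real (card X) * real (card Y))"
  by (simp add: bip_density_def edge_count_def)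

lemma edge_count_converse: "edge_count Y X (converse F) = edge_count X Y F"
proof -
  have "converse F \<inter> Y \<times> X = prod.swap ` (F \<inter> X \<times> Y)" by auto
  moreover have "inj_on prod.swap (F \<inter> X \<times> Y)" by (auto simp: inj_on_def)
  ultimately show ?thesis unfolding edge_count_def by (simp add: card_image)
qed

lemma bip_density_converse: "bip_density Y X (converse F) = bip_density X Y F"
  by (simp add: bip_density_eq_edge_count edge_count_converse mult.commute)

lemma bip_density_nonneg: "0 \<le> bip_density X Y F"
  by (simp add: bip_density_def)

lemma bip_density_le_one:
  assumes "finite X" "finite Y"
  shows "bip_density X Y F \<le> 1"
proof -
  have "card (F \<inter> X \<times> Y) \<le> card X * card Y"
    using assms by (metis card_cartesian_product card_mono finite_cartesian_product inf_le2)
  then show ?thesis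
    unfolding bip_density_def by (auto simp: divide_le_eq_1 simp flip: of_nat_mult)
qed

lemma bip_density_Int_Times:
  assumes "X' \<subseteq> X" "Y' \<subseteq> Y"
  shows "bip_density X' Y' (F \<inter> X \<times> Y) = bip_density X' Y' F"
proof -
  have "F \<inter> X \<times> Y \<inter> X' \<times> Y' = F \<inter> X' \<times> Y'" using assms by auto
  then show ?thesis by (simp add: bip_density_def)
qed

lemma card_ge_if_bip_density_ge:
  assumes "d \<le> bip_density X Y F"
  shows "d * card X * card Y \<le> card (F \<inter> X \<times> Y)"
proof (cases "card X = 0 \<or> card Y = 0")
  case True
  then show ?thesis by auto
next
  case False
  then have "0 < real (card X) * real (card Y)" by simp
  then show ?thesis
    using assms by (simp add: bip_density_def pos_le_divide_eq mult.assoc)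
qed

lemma edge_count_Un_left:
  assumes "finite X\<^sub>1" "finite X\<^sub>2" "finite Y" "X\<^sub>1 \<inter> X\<^sub>2 = {}"
  shows "edge_count (X\<^sub>1 \<union> X\<^sub>2) Y F = edge_count X\<^sub>1 Y F + edge_count X\<^sub>2 Y F"
proof -
  have "F \<inter> (X\<^sub>1 \<union> X\<^sub>2) \<times> Y = (F \<inter> X\<^sub>1 \<times> Y) \<union> (F \<inter> X\<^sub>2 \<times> Y)" by auto
  then show ?thesis
    unfolding edge_count_def using assms by (simp add: card_Un_disjoint disjoint_iff)
qed

lemma edge_count_Un_right:
  assumes "finite X" "finite Y\<^sub>1" "finite Y\<^sub>2" "Y\<^sub>1 \<inter> Y\<^sub>2 = {}"
  shows "edge_count X (Y\<^sub>1 \<union> Y\<^sub>2) F = edge_count X Y\<^sub>1 F + edge_count X Y\<^sub>2 F"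
  using edge_count_Un_left[of Y\<^sub>1 Y\<^sub>2 X "converse F"] assms by (simp add: edge_count_converse)

lemma edge_count_singleton_left: "edge_count {x} Y F = card {y\<in>Y. (x, y) \<in> F}"
proof -
  have "F \<inter> {x} \<times> Y = Pair x ` {y\<in>Y. (x, y) \<in> F}" by auto
  then show ?thesis unfolding edge_count_def by (simp add: card_image inj_on_def)
qed

lemma edge_count_singleton_right: "edge_count X {y} F = card {x\<in>X. (x, y) \<in> F}"
  using edge_count_singleton_left[of y X "converse F"] by (simp add: edge_count_converse)

lemma edge_count_remove_left:
  assumes "finite X" "finite Y" "x \<in> X"
  shows "edge_count X Y F = edge_count (X - {x}) Y F + card {y\<in>Y. (x, y) \<in> F}"
  using edge_count_Un_left[of "X - {x}" "{x}" Y F] assms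
  by (simp add: insert_absorb edge_count_singleton_left)

lemma edge_count_remove_right:
  assumes "finite X" "finite Y" "y \<in> Y"
  shows "edge_count X Y F = edge_count X (Y - {y}) F + card {x\<in>X. (x, y) \<in> F}"
  using edge_count_Un_right[of X "Y - {y}" "{y}" F] assms
  by (simp add: insert_absorb edge_count_singleton_right)

lemma edge_count_split:
  assumes "finite X" "finite Y" "X' \<subseteq> X" "Y' \<subseteq> Y"
  shows "edge_count X Y F = edge_count X' Y' F + edge_count (X - X') Y F + edge_count X' (Y - Y') F"
proof -
  have "finite X'" "finite Y'" using assms finite_subset by blast+
  moreover have "X = X' \<union> (X - X')" "Y = Y' \<union> (Y - Y')" using assms(3,4) by auto
  ultimately show ?thesis
    using assms(1,2) edge_count_Un_left[of X' "X - X'" Y F] edge_count_Un_right[of X' Y' "Y - Y'" F]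
    by simp
qed

lemma edge_count_eq_sum_right:
  assumes "finite X" "finite Y"
  shows "edge_count X Y F = (\<Sum>y\<in>Y. card {x\<in>X. (x, y) \<in> F})"
  using assms(2)
proof (induction Y rule: finite_induct)
  case empty
  then show ?case by (simp add: edge_count_def)
next
  case (insert y Y)
  then show ?case
    using edge_count_remove_right[of X "insert y Y" y F] assms by simp
qed

lemma exists_low_degree_right:
  assumes "finite X" "finite Y" "Y \<noteq> {}"
  shows "\<exists>y\<in>Y. real (card {x\<in>X. (x, y) \<in> F}) * card Y \<le> edge_count X Y F"
proof (rule ccontr)
  assume "\<not> ?thesis"
  then have "(\<Sum>y\<in>Y. real (edge_count X Y F)) < (\<Sum>y\<in>Y. real (card {x\<in>X. (x, y) \<in> F}) * card Y)"
    using assms by (intro sum_strict_mono) (auto simp: not_le)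
  also have "\<dots> = real (edge_count X Y F) * card Y"
    using edge_count_eq_sum_right[OF assms(1,2), of F] by (simp add: sum_distrib_right)
  finally show False by simp
qed

lemma bip_density_le_Diff_low_degree:
  assumes "finite X" "finite Y" "y \<in> Y" "Y - {y} \<noteq> {}"
    and low: "real (card {x\<in>X. (x, y) \<in> F}) * card Y \<le> edge_count X Y F"
  shows "bip_density X Y F \<le> bip_density X (Y - {y}) F"
proof (cases "card X = 0")
  case True
  then show ?thesis by (simp add: bip_density_def)
next
  case False
  define e where "e = real (edge_count X Y F)"
  define D where "D = real (card {x\<in>X. (x, y) \<in> F})"
  define c where "c = real (card Y)"
  define r where "r = real (card X)"
  have "card (Y - {y}) \<noteq> 0" using assms(2,4) by (metis card_0_eq finite_Diff)
  then have c: "real (card (Y - {y})) = c - 1" "1 < c"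
    using assms by (auto simp: c_def of_nat_diff)
  have r: "0 < r" using False by (simp add: r_def)
  have "bip_density X Y F = e * (c - 1) / (r * c * (c - 1))"
    using c r by (simp add: bip_density_eq_edge_count e_def c_def r_def)
  also have "\<dots> \<le> (e - D) * c / (r * c * (c - 1))"
    using low c r by (intro divide_right_mono) (auto simp: e_def D_def c_def algebra_simps)
  also have "\<dots> = bip_density X (Y - {y}) F"
    using c r edge_count_remove_right[OF assms(1-3), of F]
    by (simp add: bip_density_eq_edge_count e_def D_def r_def)
  finally show ?thesis .
qed

lemma exists_subset_bip_density_ge:
  assumes "finite X" "finite Y" "0 < s" "s \<le> card Y"
  shows "\<exists>Y'\<subseteq>Y. card Y' = s \<and> bip_density X Y F \<le> bip_density X Y' F"
  using assms(2,4)
proof (induction "card Y - s" arbitrary: Y)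
  case 0
  then show ?case by (intro exI[of _ Y]) auto
next
  case (Suc m)
  then have "s < card Y" by simp
  then have "Y \<noteq> {}" by auto
  then obtain y where y: "y \<in> Y" "real (card {x\<in>X. (x, y) \<in> F}) * card Y \<le> edge_count X Y F"
    using exists_low_degree_right[OF assms(1) Suc.prems(1)] by blast
  have card: "card (Y - {y}) = card Y - 1"
    using y Suc.prems(1) by simp
  then have "card (Y - {y}) \<noteq> 0"
    using \<open>s < card Y\<close> assms(3) by linarith
  then have "Y - {y} \<noteq> {}" by (metis card.empty)
  then have shrink: "bip_density X Y F \<le> bip_density X (Y - {y}) F"
    using bip_density_le_Diff_low_degree[OF assms(1) Suc.prems(1) y(1) _ y(2)] by simp
  have "m = card (Y - {y}) - s" "s \<le> card (Y - {y})"
    using Suc.hyps(2) card by linarith+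
  then obtain Y' where "Y' \<subseteq> Y - {y}" "card Y' = s" "bip_density X (Y - {y}) F \<le> bip_density X Y' F"
    using Suc.hyps(1)[of "Y - {y}"] Suc.prems(1) by blast
  with shrink show ?case by (intro exI[of _ Y']) auto
qed

section \<open>Maximisers of the potential are super-regular\<close>

definition potential :: "real \<Rightarrow> 'a set \<Rightarrow> 'a set \<Rightarrow> ('a \<times> 'a) set \<Rightarrow> real" where
  "potential \<gamma> X Y F = bip_density X Y F * real (min (card X) (card Y)) powr \<gamma>"

definition potential_maximal :: "real \<Rightarrow> 'a set \<Rightarrow> 'a set \<Rightarrow> ('a \<times> 'a) set \<Rightarrow> bool" where
  "potential_maximal \<gamma> X Y F \<longleftrightarrow>
     (\<forall>X' Y'. X' \<subseteq> X \<longrightarrow> Y' \<subseteq> Y \<longrightarrow> X' \<noteq> {} \<longrightarrow> Y' \<noteq> {} \<longrightarrow>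
        potential \<gamma> X' Y' F \<le> potential \<gamma> X Y F)"

lemma potential_converse: "potential \<gamma> Y X (converse F) = potential \<gamma> X Y F"
  by (simp add: potential_def bip_density_converse min.commute)

lemma potential_maximal_converse:
  "potential_maximal \<gamma> Y X (converse F) \<longleftrightarrow> potential_maximal \<gamma> X Y F"
  unfolding potential_maximal_def potential_converse by blast

lemma potential_balanced:
  "card X = k \<Longrightarrow> card Y = k \<Longrightarrow> potential \<gamma> X Y F = bip_density X Y F * real k powr \<gamma>"
  by (simp add: potential_def)

lemma exists_balanced_potential_ge:
  assumes "finite X" "finite Y" "X \<noteq> {}" "Y \<noteq> {}"
  obtains X' Y' where "X' \<subseteq> X" "Y' \<subseteq> Y" "X' \<noteq> {}" "card X' = card Y'"
    "potential \<gamma> X Y F \<le> potential \<gamma> X' Y' F"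
proof -
  have trim: "\<exists>Y'\<subseteq>Y. card Y' = card X \<and> potential \<gamma> X Y F \<le> potential \<gamma> X Y' F"
    if hyps: "finite X" "finite Y" "X \<noteq> {}" "card X \<le> card Y" for X Y :: "'a set" and F
  proof -
    obtain Y' where Y': "Y' \<subseteq> Y" "card Y' = card X" "bip_density X Y F \<le> bip_density X Y' F"
      using exists_subset_bip_density_ge[of X Y "card X" F] hyps by (auto simp: card_gt_0_iff)
    have "potential \<gamma> X Y F = bip_density X Y F * real (card X) powr \<gamma>"
      using hyps(4) by (simp add: potential_def min_def)
    also have "\<dots> \<le> bip_density X Y' F * real (card X) powr \<gamma>"
      using Y'(3) by (rule mult_right_mono) simp
    also have "\<dots> = potential \<gamma> X Y' F"
      using Y'(2) by (simp add: potential_def)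
    finally show ?thesis using Y'(1,2) by (intro exI[of _ Y']) simp
  qed
  show ?thesis
  proof (cases "card X \<le> card Y")
    case True
    then obtain Y' where "Y' \<subseteq> Y" "card X = card Y'" "potential \<gamma> X Y F \<le> potential \<gamma> X Y' F"
      using trim[OF assms(1-3)] by (metis (no_types))
    with assms(3) show ?thesis by (intro that) auto
  next
    case False
    then have "card Y \<le> card X" by simp
    then obtain X' where X': "X' \<subseteq> X" "card X' = card Y"
        "potential \<gamma> Y X (converse F) \<le> potential \<gamma> Y X' (converse F)"
      using trim[OF assms(2,1,4)] by blast
    moreover have "X' \<noteq> {}" using X'(2) assms(2,4) by auto
    moreover have "potential \<gamma> X Y F \<le> potential \<gamma> X' Y F"
      using X'(3) by (simp only: potential_converse)
    ultimately show ?thesis by (intro that) auto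
  qed
qed

lemma exists_balanced_potential_maximal:
  assumes "finite A" "finite B" "A \<noteq> {}" "B \<noteq> {}"
  obtains X Y where "X \<subseteq> A" "Y \<subseteq> B" "X \<noteq> {}" "card X = card Y"
    "potential \<gamma> A B F \<le> potential \<gamma> X Y F" "potential_maximal \<gamma> X Y F"
proof -
  define P where "P = {(X, Y). X \<subseteq> A \<and> Y \<subseteq> B \<and> X \<noteq> {} \<and> Y \<noteq> {}}"
  define f where "f = (\<lambda>(X, Y). potential \<gamma> X Y F)"
  have "P \<subseteq> Pow A \<times> Pow B" by (auto simp: P_def)
  then have "finite P" using assms(1,2) finite_subset by blast
  moreover have AB: "(A, B) \<in> P" using assms by (simp add: P_def)
  ultimately have "Max (f ` P) \<in> f ` P" by (intro Max_in) auto
  then obtain Q where Q: "Max (f ` P) = f Q" "Q \<in> P" by (rule imageE)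
  obtain X\<^sub>1 Y\<^sub>1 where "Q = (X\<^sub>1, Y\<^sub>1)" by (cases Q)
  with Q have XY\<^sub>1: "(X\<^sub>1, Y\<^sub>1) \<in> P" "f (X\<^sub>1, Y\<^sub>1) = Max (f ` P)" by simp_all
  have max: "potential \<gamma> X' Y' F \<le> potential \<gamma> X\<^sub>1 Y\<^sub>1 F" if "(X', Y') \<in> P" for X' Y'
    using Max_ge[OF finite_imageI[OF \<open>finite P\<close>] imageI[OF that, of f]] XY\<^sub>1(2) by (simp add: f_def)
  have sub: "X\<^sub>1 \<subseteq> A" "Y\<^sub>1 \<subseteq> B" "X\<^sub>1 \<noteq> {}" "Y\<^sub>1 \<noteq> {}"
    using XY\<^sub>1(1) by (auto simp: P_def)
  then have "finite X\<^sub>1" "finite Y\<^sub>1"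
    using finite_subset assms(1,2) by blast+
  then obtain X Y where XY: "X \<subseteq> X\<^sub>1" "Y \<subseteq> Y\<^sub>1" "X \<noteq> {}" "card X = card Y"
      "potential \<gamma> X\<^sub>1 Y\<^sub>1 F \<le> potential \<gamma> X Y F"
    using exists_balanced_potential_ge[of X\<^sub>1 Y\<^sub>1 \<gamma> F] sub(3,4) by metis
  have "finite X" using \<open>finite X\<^sub>1\<close> XY(1) finite_subset by blast
  then have "Y \<noteq> {}" using XY(3,4) by auto
  have "potential_maximal \<gamma> X Y F"
    unfolding potential_maximal_def
  proof (intro allI impI)
    fix X' Y' assume "X' \<subseteq> X" "Y' \<subseteq> Y" "X' \<noteq> {}" "Y' \<noteq> {}"
    then have "(X', Y') \<in> P" using XY(1,2) sub(1,2) by (auto simp: P_def)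
    then show "potential \<gamma> X' Y' F \<le> potential \<gamma> X Y F" by (rule order_trans[OF max XY(5)])
  qed
  moreover have "potential \<gamma> A B F \<le> potential \<gamma> X Y F" by (rule order_trans[OF max[OF AB] XY(5)])
  moreover have "X \<subseteq> A" "Y \<subseteq> B" using XY(1,2) sub(1,2) by auto
  ultimately show ?thesis using XY(3,4) by (intro that)
qed

lemma potential_maximal_edge_count_le:
  assumes "finite X" "finite Y" "card X = k" "card Y = k" "potential_maximal \<gamma> X Y F"
    and "S \<subseteq> X" "T \<subseteq> Y"
  shows "real (edge_count S T F)
           \<le> bip_density X Y F * card S * card T * (k / min (card S) (card T)) powr \<gamma>"
proof (cases "S = {} \<or> T = {}")
  case True
  then show ?thesis by (auto simp: edge_count_def)
next
  case False
  define s t m where "s = real (card S)" and "t = real (card T)"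
    and "m = real (min (card S) (card T))"
  have "finite S" "finite T" using finite_subset assms(1,2,6,7) by blast+
  then have "0 < s" "0 < t" "0 < m" using False by (auto simp: s_def t_def m_def card_gt_0_iff)
  have "potential \<gamma> S T F \<le> potential \<gamma> X Y F"
    using assms(5-7) False unfolding potential_maximal_def by blast
  then have "real (edge_count S T F) / (s * t) * m powr \<gamma> \<le> bip_density X Y F * k powr \<gamma>"
    using assms(3,4) by (simp add: potential_def potential_balanced bip_density_eq_edge_count s_def t_def m_def)
  then have "real (edge_count S T F) * m powr \<gamma> \<le> bip_density X Y F * s * t * k powr \<gamma>"
    using \<open>0 < s\<close> \<open>0 < t\<close> by (simp add: field_simps)
  then have "real (edge_count S T F) \<le> bip_density X Y F * s * t * k powr \<gamma> / m powr \<gamma>"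
    using \<open>0 < m\<close> by (simp add: field_simps)
  then show ?thesis by (simp add: powr_divide s_def t_def m_def)
qed

lemma potential_maximal_degree_ge:
  assumes "finite X" "finite Y" "card X = k" "card Y = k" "potential_maximal \<gamma> X Y F"
    and "0 \<le> \<gamma>" "\<gamma> \<le> 1" "x \<in> X"
  shows "(1 - \<gamma>) * bip_density X Y F * k \<le> card {y\<in>Y. (x, y) \<in> F}"
proof -
  define p D where "p = bip_density X Y F" and "D = real (card {y\<in>Y. (x, y) \<in> F})"
  have "0 < k" using assms(1,3,8) card_gt_0_iff by blast
  have card: "real (card (X - {x})) = real k - 1" "min (card (X - {x})) (card Y) = card (X - {x})"
    using assms \<open>0 < k\<close> by (auto simp: of_nat_diff)
  have "real (edge_count X Y F) = p * k * k"
    using \<open>0 < k\<close> assms(3,4) by (simp add: p_def bip_density_eq_edge_count)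
  then have "p * k * k - D = real (edge_count (X - {x}) Y F)"
    using edge_count_remove_left[OF assms(1,2,8), of F] by (simp add: D_def)
  also have "\<dots> \<le> p * (real k - 1) * k * (k / (real k - 1)) powr \<gamma>"
    using potential_maximal_edge_count_le[OF assms(1-5), of "X - {x}" Y] card assms(4)
    by (simp add: p_def)
  also have "\<dots> = p * k * ((real k - 1) * (k / (real k - 1)) powr \<gamma>)"
    by (simp add: algebra_simps)
  also have "\<dots> \<le> p * k * ((real k - 1) + \<gamma> * (k - (real k - 1)))"
    using mult_powr_le_affine[of "real k - 1" k \<gamma>] \<open>0 < k\<close> assms(6,7) bip_density_nonneg[of X Y F]
    by (intro mult_left_mono) (auto simp: p_def)
  finally show ?thesis
    unfolding p_def[symmetric] D_def[symmetric] by (auto simp: algebra_simps)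
qed

lemma potential_maximal_density_le:
  assumes "finite X" "finite Y" "card X = k" "card Y = k" "potential_maximal \<gamma> X Y F"
    and "0 < \<epsilon>" "\<epsilon> < 1" "0 \<le> \<gamma>" "2 * \<gamma> * (1 + ln (1 / \<epsilon>)) \<le> \<epsilon>\<^sup>2"
    and "X' \<subseteq> X" "Y' \<subseteq> Y" "\<epsilon> * k \<le> card X'" "\<epsilon> * k \<le> card Y'"
  shows "bip_density X' Y' F \<le> bip_density X Y F + \<epsilon>"
proof (rule ccontr)
  define p q where "p = bip_density X Y F" and "q = bip_density X' Y' F"
  assume "\<not> ?thesis"
  then have "p + \<epsilon> < q" by (simp add: p_def q_def)
  moreover have "0 \<le> p" "p \<le> 1"
    unfolding p_def using bip_density_nonneg bip_density_le_one assms(1,2) by auto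
  ultimately have "0 < q" using assms(6) by linarith
  then have "X' \<noteq> {}" "Y' \<noteq> {}" by (auto simp: q_def bip_density_def)
  then have "X \<noteq> {}" using assms(10) by auto
  then have "0 < k" using assms(1) by (simp add: assms(3)[symmetric] card_gt_0_iff)
  define m where "m = real (min (card X') (card Y'))"
  have "\<epsilon> * k \<le> m" using assms(12,13) by (simp add: m_def)
  have "p * k powr \<gamma> < (p + \<epsilon>) * \<epsilon> powr \<gamma> * k powr \<gamma>"
    using less_plus_mult_powr[OF \<open>0 \<le> p\<close> \<open>p \<le> 1\<close> assms(6,7) small_exponent_bounds(2)[OF assms(6-9)]]
      \<open>0 < k\<close>
    by (intro mult_strict_right_mono) auto
  also have "\<dots> = (p + \<epsilon>) * (\<epsilon> * k) powr \<gamma>"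
    using assms(6) by (simp add: powr_mult)
  also have "\<dots> \<le> q * m powr \<gamma>"
    using \<open>p + \<epsilon> < q\<close> \<open>\<epsilon> * k \<le> m\<close> assms(6,8) \<open>0 \<le> p\<close>
    by (intro mult_mono powr_mono2) auto
  also have "\<dots> = potential \<gamma> X' Y' F"
    by (simp add: potential_def q_def m_def)
  also have "\<dots> \<le> potential \<gamma> X Y F"
    using assms(5,10,11) \<open>X' \<noteq> {}\<close> \<open>Y' \<noteq> {}\<close> unfolding potential_maximal_def by blast
  also have "\<dots> = p * k powr \<gamma>"
    using assms(3,4) by (simp add: potential_balanced p_def)
  finally show False by simp
qed

lemma potential_maximal_edge_count_Diff_left:
  fixes \<gamma> :: real
  assumes "finite X" "finite Y" "card X = k" "card Y = k" "potential_maximal \<gamma> X Y F"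
    and "0 \<le> \<gamma>" "\<gamma> \<le> 1" "X' \<subseteq> X"
  shows "real (edge_count (X - X') Y F)
           \<le> bip_density X Y F * k * (k - real (card X') + \<gamma> * card X')"
proof -
  define p x where "p = bip_density X Y F" and "x = real (card X')"
  have "x \<le> k" using card_mono[OF assms(1,8)] assms(3) by (simp add: x_def)
  have "real (card (X - X')) = k - x"
    using card_Diff_subset[OF finite_subset[OF assms(8,1)] assms(8)] card_mono[OF assms(1,8)] assms(3)
    by (simp add: x_def of_nat_diff)
  moreover have "min (card (X - X')) (card Y) = card (X - X')"
    using card_mono[OF assms(1), of "X - X'"] assms(3,4) by auto
  ultimately have "real (edge_count (X - X') Y F) \<le> p * (k - x) * k * (k / (k - x)) powr \<gamma>"
    using potential_maximal_edge_count_le[OF assms(1-5), of "X - X'" Y] assms(4) by (simp add: p_def)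
  also have "\<dots> = p * k * ((k - x) * (k / (k - x)) powr \<gamma>)"
    by (simp add: algebra_simps)
  also have "\<dots> \<le> p * k * ((k - x) + \<gamma> * (k - (k - x)))"
    using mult_powr_le_affine[of "k - x" k \<gamma>] \<open>x \<le> k\<close> assms(6,7) bip_density_nonneg[of X Y F]
    by (intro mult_left_mono) (auto simp: p_def x_def)
  finally show ?thesis by (simp add: p_def x_def)
qed

lemma potential_maximal_edge_count_Diff_right:
  fixes \<epsilon> \<gamma> :: real
  assumes "finite X" "finite Y" "card X = k" "card Y = k" "potential_maximal \<gamma> X Y F"
    and "0 < \<epsilon>" "\<epsilon> \<le> 1" "0 \<le> \<gamma>" "\<gamma> \<le> 1" "\<gamma> * ln (1 / \<epsilon>) \<le> 1/2"
    and "X' \<subseteq> X" "Y' \<subseteq> Y" "\<epsilon> * k \<le> card X'"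
  shows "real (edge_count X' (Y - Y') F) \<le> bip_density X Y F
           * (card X' * (k - real (card Y')) + \<gamma> * card X' * k * (1 + 2 * ln (1 / \<epsilon>)))"
proof -
  define p x y where "p = bip_density X Y F" and "x = real (card X')" and "y = real (card Y')"
  have "x \<le> k" "y \<le> k"
    using card_mono[OF assms(1,11)] card_mono[OF assms(2,12)] assms(3,4) by (auto simp: x_def y_def)
  have "real (card (Y - Y')) = k - y"
    using card_Diff_subset[OF finite_subset[OF assms(12,2)] assms(12)] card_mono[OF assms(2,12)] assms(4)
    by (simp add: y_def of_nat_diff)
  then have "real (edge_count X' (Y - Y') F) \<le> p * (x * (k - y) * (k / min x (k - y)) powr \<gamma>)"
    using potential_maximal_edge_count_le[OF assms(1-5,11), of "Y - Y'"]
    by (simp add: p_def x_def of_nat_min mult.assoc)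
  also have "\<dots> \<le> p * (x * (k - y) + \<gamma> * x * k * (1 + 2 * ln (1 / \<epsilon>)))"
    using mult_min_powr_le[of \<epsilon> k x "k - y" \<gamma>] assms(6-10,13) \<open>x \<le> k\<close> \<open>y \<le> k\<close>
      bip_density_nonneg[of X Y F]
    by (intro mult_left_mono) (auto simp: p_def x_def y_def)
  finally show ?thesis by (simp add: p_def x_def y_def)
qed

lemma potential_maximal_density_ge:
  assumes "finite X" "finite Y" "card X = k" "card Y = k" "potential_maximal \<gamma> X Y F"
    and "0 < \<epsilon>" "\<epsilon> < 1" "0 \<le> \<gamma>" "2 * \<gamma> * (1 + ln (1 / \<epsilon>)) \<le> \<epsilon>\<^sup>2"
    and "X' \<subseteq> X" "Y' \<subseteq> Y" "\<epsilon> * k \<le> card X'" "\<epsilon> * k \<le> card Y'"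
  shows "bip_density X Y F - \<epsilon> \<le> bip_density X' Y' F"
proof (rule ccontr)
  define p q L where "p = bip_density X Y F" and "q = bip_density X' Y' F"
    and "L = ln (1 / \<epsilon>)"
  define x y where "x = real (card X')" and "y = real (card Y')"
  assume "\<not> ?thesis"
  then have "q < p - \<epsilon>" by (simp add: p_def q_def)
  have "0 \<le> q" "p \<le> 1"
    unfolding p_def q_def using bip_density_nonneg bip_density_le_one assms(1,2) by auto
  have "0 \<le> L" using assms(6,7) by (simp add: L_def)
  have "\<gamma> \<le> \<epsilon>" "\<gamma> * L \<le> \<epsilon>\<^sup>2 / 2"
    using small_exponent_bounds[OF assms(6-9)] by (simp_all add: L_def)
  moreover have "\<epsilon>\<^sup>2 \<le> 1" using assms(6,7) by (simp add: power_le_one)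
  ultimately have "\<gamma> \<le> 1" "\<gamma> * L \<le> 1/2" using assms(7) by linarith+
  have "0 < p" using \<open>q < p - \<epsilon>\<close> \<open>0 \<le> q\<close> assms(6) by linarith
  have "k \<noteq> 0"
  proof
    assume "k = 0"
    then have "p = 0" using assms(3) by (simp add: p_def bip_density_def)
    with \<open>0 < p\<close> show False by simp
  qed
  then have "0 < \<epsilon> * k" using assms(6) by simp
  then have "0 < x" "0 < y" unfolding x_def y_def using assms(12,13) by linarith+
  have "real (edge_count X Y F) = p * k * k"
    using \<open>k \<noteq> 0\<close> assms(3,4) by (simp add: p_def bip_density_eq_edge_count)
  moreover note edge_count_split[OF assms(1,2,10,11), of F]
  moreover have "real (edge_count X' Y' F) < (p - \<epsilon>) * x * y"
    using \<open>q < p - \<epsilon>\<close> \<open>0 < x\<close> \<open>0 < y\<close>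
    by (simp add: q_def bip_density_eq_edge_count x_def y_def field_simps)
  moreover have "real (edge_count (X - X') Y F) \<le> p * k * (k - x + \<gamma> * x)"
    using potential_maximal_edge_count_Diff_left[OF assms(1-5,8) \<open>\<gamma> \<le> 1\<close> assms(10)]
    by (simp add: p_def x_def)
  moreover have "real (edge_count X' (Y - Y') F) \<le> p * (x * (k - y) + \<gamma> * x * k * (1 + 2 * L))"
    using potential_maximal_edge_count_Diff_right[OF assms(1-6) _ assms(8) \<open>\<gamma> \<le> 1\<close> _ assms(10-12)]
      assms(7) \<open>\<gamma> * L \<le> 1/2\<close>
    by (simp add: p_def x_def y_def L_def)
  (* Maximality lets the two complementary pairs exceed density p only by a factor
     1 + O(\<gamma> log(1/\<epsilon>)), which cannot make up for the deficit \<epsilon> x y of the sparse pair. *)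
  moreover have "(p - \<epsilon>) * x * y + p * k * (k - x + \<gamma> * x) + p * (x * (k - y) + \<gamma> * x * k * (1 + 2 * L))
      = p * k * k - \<epsilon> * x * y + 2 * \<gamma> * (1 + L) * p * k * x"
    by (simp add: algebra_simps)
  ultimately have "\<epsilon> * x * y < 2 * \<gamma> * (1 + L) * p * k * x" by linarith
  also have "\<dots> \<le> 2 * \<gamma> * (1 + L) * 1 * k * x"
    using \<open>p \<le> 1\<close> \<open>0 \<le> L\<close> \<open>0 < x\<close> assms(8) by (intro mult_right_mono mult_left_mono) auto
  also have "\<dots> \<le> \<epsilon>\<^sup>2 * k * x"
    using assms(9) \<open>0 < x\<close> by (intro mult_right_mono) (auto simp: L_def)
  also have "\<dots> = \<epsilon> * x * (\<epsilon> * k)"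
    by (simp add: power2_eq_square)
  also have "\<dots> \<le> \<epsilon> * x * y"
    using assms(6,13) \<open>0 < x\<close> by (intro mult_left_mono) (auto simp: y_def)
  finally show False by simp
qed

lemma potential_maximal_eps_regular:
  assumes "finite X" "finite Y" "card X = card Y" "potential_maximal \<gamma> X Y F"
    and "0 < \<epsilon>" "\<epsilon> < 1" "0 \<le> \<gamma>" "2 * \<gamma> * (1 + ln (1 / \<epsilon>)) \<le> \<epsilon>\<^sup>2"
  shows "eps_regular \<epsilon> X Y F"
  unfolding eps_regular_def
proof (intro allI impI)
  fix X' Y'
  assume sub: "X' \<subseteq> X" "Y' \<subseteq> Y" and "\<epsilon> * card X \<le> card X'" "\<epsilon> * card Y \<le> card Y'"
  then have large: "\<epsilon> * card X \<le> card X'" "\<epsilon> * card X \<le> card Y'" using assms(3) by simp_all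
  show "\<bar>bip_density X Y F - bip_density X' Y' F\<bar> \<le> \<epsilon>"
    using potential_maximal_density_le[OF assms(1,2) refl assms(3)[symmetric] assms(4-8) sub large]
      potential_maximal_density_ge[OF assms(1,2) refl assms(3)[symmetric] assms(4-8) sub large]
    by (simp add: abs_le_iff)
qed

lemma potential_maximal_super_regular:
  assumes "finite X" "finite Y" "card X = card Y" "potential_maximal \<gamma> X Y F"
    and "0 < \<epsilon>" "\<epsilon> < 1" "0 \<le> \<gamma>" "2 * \<gamma> * (1 + ln (1 / \<epsilon>)) \<le> \<epsilon>\<^sup>2"
    and "\<delta> \<le> bip_density X Y F - \<epsilon>"
  shows "super_regular \<epsilon> \<delta> X Y F"
proof -
  define p where "p = bip_density X Y F"
  have "0 \<le> p" "p \<le> 1" using bip_density_nonneg bip_density_le_one assms(1,2) by (auto simp: p_def)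
  have "\<gamma> \<le> \<epsilon>" by (rule small_exponent_bounds(1)[OF assms(5-8)])
  then have "\<gamma> \<le> 1" using assms(6) by linarith
  have "\<gamma> * p \<le> \<gamma>" using mult_left_le[OF \<open>p \<le> 1\<close> assms(7)] .
  then have \<delta>: "\<delta> \<le> (1 - \<gamma>) * p"
    using assms(9) \<open>\<gamma> \<le> \<epsilon>\<close> by (simp add: p_def algebra_simps)
  have "\<delta> * card Y \<le> card {y\<in>Y. (x, y) \<in> F}" if "x \<in> X" for x
  proof -
    have "\<delta> * card Y \<le> (1 - \<gamma>) * p * card Y" using \<delta> by (intro mult_right_mono) auto
    also have "\<dots> \<le> card {y\<in>Y. (x, y) \<in> F}"
      using potential_maximal_degree_ge[OF assms(1-3) refl assms(4,7) \<open>\<gamma> \<le> 1\<close> that]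
      by (simp add: p_def)
    finally show ?thesis .
  qed
  moreover have "\<delta> * card X \<le> card {x\<in>X. (x, y) \<in> F}" if "y \<in> Y" for y
  proof -
    have "\<delta> * card X \<le> (1 - \<gamma>) * p * card X" using \<delta> by (intro mult_right_mono) auto
    also have "\<dots> \<le> card {x\<in>X. (y, x) \<in> converse F}"
      using potential_maximal_degree_ge[of Y X "card X" \<gamma> "converse F" y] assms(1-4,7) \<open>\<gamma> \<le> 1\<close> that
      by (simp add: p_def bip_density_converse potential_maximal_converse)
    finally show ?thesis by simp
  qed
  ultimately show ?thesis
    using potential_maximal_eps_regular[OF assms(1-8)] by (simp add: super_regular_def)
qed

lemma potential_maximal_Int_Times:
  "potential_maximal \<gamma> X Y (F \<inter> X \<times> Y) \<longleftrightarrow> potential_maximal \<gamma> X Y F"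
  by (simp add: potential_maximal_def potential_def bip_density_Int_Times)

lemma density_size_bounds_of_potential_ge:
  fixes d p \<gamma> :: real and k N :: nat
  assumes "0 < \<gamma>" "0 < d" "p \<le> 1" "0 < k" "k \<le> N" "d * N powr \<gamma> \<le> p * k powr \<gamma>"
  shows "d \<le> p" "d powr (1 / \<gamma>) * N \<le> k"
proof -
  have "d * k powr \<gamma> \<le> d * N powr \<gamma>"
    using assms(1,2,5) by (intro mult_left_mono powr_mono2) auto
  with assms(6) have "d * k powr \<gamma> \<le> p * k powr \<gamma>" by linarith
  then show "d \<le> p" using assms(4) by simp
  have "p * k powr \<gamma> \<le> 1 * k powr \<gamma>" using assms(3) by (intro mult_right_mono) auto
  with assms(6) have "(d * N powr \<gamma>) powr (1 / \<gamma>) \<le> (k powr \<gamma>) powr (1 / \<gamma>)"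
    using assms(1,2) by (intro powr_mono2) auto
  then show "d powr (1 / \<gamma>) * N \<le> k"
    using assms(1,2) by (simp add: powr_mult powr_powr)
qed

lemma exists_super_regular_pair:
  assumes "finite A" "finite B" "card A = N" "card B = N"
    and "0 < \<epsilon>" "\<epsilon> < 1" "0 < \<gamma>" "2 * \<gamma> * (1 + ln (1 / \<epsilon>)) \<le> \<epsilon>\<^sup>2"
    and "0 < d" "d \<le> bip_density A B F"
  obtains X Y where "X \<subseteq> A" "Y \<subseteq> B" "card X = card Y" "d powr (1 / \<gamma>) * N \<le> card X"
    "d \<le> bip_density X Y (F \<inter> X \<times> Y)" "super_regular \<epsilon> (d - \<epsilon>) X Y (F \<inter> X \<times> Y)"
    "d * (d powr (1 / \<gamma>) * N)\<^sup>2 \<le> card (F \<inter> X \<times> Y)"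
proof -
  have "A \<noteq> {}" "B \<noteq> {}" using assms(9,10) by (auto simp: bip_density_def)
  then obtain X Y where XY: "X \<subseteq> A" "Y \<subseteq> B" "X \<noteq> {}" "card X = card Y"
      "potential \<gamma> A B F \<le> potential \<gamma> X Y F" "potential_maximal \<gamma> X Y F"
    using exists_balanced_potential_maximal[OF assms(1,2)] by metis
  define k p where "k = card X" and "p = bip_density X Y (F \<inter> X \<times> Y)"
  have fin: "finite X" "finite Y" using XY(1,2) assms(1,2) finite_subset by blast+
  have "0 < k" using fin(1) XY(3) by (simp add: k_def card_gt_0_iff)
  have "k \<le> N" using card_mono[OF assms(1) XY(1)] assms(3) by (simp add: k_def)
  have p: "p = bip_density X Y F" by (simp add: p_def bip_density_Int_Times)
  have "p \<le> 1" using bip_density_le_one fin by (simp add: p)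
  have "d * N powr \<gamma> \<le> bip_density A B F * N powr \<gamma>"
    using assms(10) by (rule mult_right_mono) simp
  also have "\<dots> = potential \<gamma> A B F" using assms(3,4) by (simp add: potential_balanced)
  also have "\<dots> \<le> potential \<gamma> X Y F" by (rule XY(5))
  also have "\<dots> = p * k powr \<gamma>" using XY(4) by (simp add: potential_balanced p k_def)
  finally have "d * N powr \<gamma> \<le> p * k powr \<gamma>" .
  then have "d \<le> p" and size: "d powr (1 / \<gamma>) * N \<le> k"
    using density_size_bounds_of_potential_ge[OF assms(7,9) \<open>p \<le> 1\<close> \<open>0 < k\<close> \<open>k \<le> N\<close>] by auto
  have "potential_maximal \<gamma> X Y (F \<inter> X \<times> Y)"
    using XY(6) by (simp add: potential_maximal_Int_Times)
  then have "super_regular \<epsilon> (d - \<epsilon>) X Y (F \<inter> X \<times> Y)"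
    using potential_maximal_super_regular[OF fin XY(4) _ assms(5,6) _ assms(8)] assms(7) \<open>d \<le> p\<close>
    by (simp add: p_def)
  have "(d powr (1 / \<gamma>) * N)\<^sup>2 \<le> (real k)\<^sup>2"
    using size by (intro power_mono) auto
  then have "d * (d powr (1 / \<gamma>) * N)\<^sup>2 \<le> d * (real k)\<^sup>2"
    using assms(9) by (intro mult_left_mono) auto
  also have "\<dots> \<le> card (F \<inter> X \<times> Y)"
    using card_ge_if_bip_density_ge[OF \<open>d \<le> p\<close>[unfolded p_def]] XY(4)
    by (simp add: k_def Int_assoc power2_eq_square mult.assoc)
  finally show ?thesis
    using XY(1,2,4) size \<open>d \<le> p\<close> \<open>super_regular \<epsilon> (d - \<epsilon>) X Y (F \<inter> X \<times> Y)\<close>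
    by (intro that) (auto simp: k_def p_def)
qed

section \<open>Greedy decomposition\<close>

lemma indexed_partition_extend:
  assumes "(\<Union>i\<in>{0..K}. G i) = F - H" "disjoint_family_on G {0..K}" "H \<subseteq> F"
  shows "(\<Union>i\<in>{0..Suc K}. (G(Suc K := H)) i) = F" "disjoint_family_on (G(Suc K := H)) {0..Suc K}"
proof -
  have idx: "{0..Suc K} = insert (Suc K) {0..K}" by auto
  have "(\<Union>i\<in>{0..K}. (G(Suc K := H)) i) = (\<Union>i\<in>{0..K}. G i)" by (rule SUP_cong) simp_all
  then have rest: "(\<Union>i\<in>{0..K}. (G(Suc K := H)) i) = F - H" using assms(1) by simp
  show "(\<Union>i\<in>{0..Suc K}. (G(Suc K := H)) i) = F"
    unfolding idx UN_insert fun_upd_same rest using assms(3) by auto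
  have "disjoint_family_on (G(Suc K := H)) {0..K}"
    using assms(2) by (auto simp: disjoint_family_on_def)
  then show "disjoint_family_on (G(Suc K := H)) {0..Suc K}"
    using rest by (auto simp: idx disjoint_family_on_insert)
qed

lemma greedy_indexed_partition:
  fixes E :: "'e set" and P :: "'b \<Rightarrow> 'e set \<Rightarrow> bool" and Q :: "'e set \<Rightarrow> bool"
  assumes "finite E" "0 < c"
    and piece: "\<And>F. F \<subseteq> E \<Longrightarrow> \<not> Q F \<Longrightarrow> \<exists>b G. G \<subseteq> F \<and> P b G \<and> c \<le> real (card G)"
  shows "\<exists>K (b :: nat \<Rightarrow> 'b) (G :: nat \<Rightarrow> 'e set). (\<Union>i\<in>{0..K}. G i) = E \<and> disjoint_family_on G {0..K}
           \<and> Q (G 0) \<and> (\<forall>i\<in>{1..K}. P (b i) (G i)) \<and> real K * c \<le> real (card E)"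
proof -
  have "\<exists>K (b :: nat \<Rightarrow> 'b) (G :: nat \<Rightarrow> 'e set). (\<Union>i\<in>{0..K}. G i) = F \<and> disjoint_family_on G {0..K}
           \<and> Q (G 0) \<and> (\<forall>i\<in>{1..K}. P (b i) (G i)) \<and> real K * c \<le> real (card F)"
    if "F \<subseteq> E" for F
    using that
  proof (induction "card F" arbitrary: F rule: less_induct)
    case less
    show ?case
    proof (cases "Q F")
      case True
      then show ?thesis
        by (intro exI[of _ 0] exI[of _ "\<lambda>_. F"] exI) (simp add: disjoint_family_on_def)
    next
      case False
      then obtain b\<^sub>1 G\<^sub>1 where G\<^sub>1: "G\<^sub>1 \<subseteq> F" "P b\<^sub>1 G\<^sub>1" "c \<le> real (card G\<^sub>1)"
        using piece less.prems by blast
      have "finite F" using less.prems assms(1) finite_subset by blast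
      have "G\<^sub>1 \<noteq> {}" using G\<^sub>1(3) assms(2) by auto
      then have "F - G\<^sub>1 \<subset> F" using G\<^sub>1(1) by blast
      then have "card (F - G\<^sub>1) < card F" by (rule psubset_card_mono[OF \<open>finite F\<close>])
      then obtain K b G where IH: "(\<Union>i\<in>{0..K}. G i) = F - G\<^sub>1" "disjoint_family_on G {0..K}"
          "Q (G 0)" "\<forall>i\<in>{1..K}. P (b i) (G i)" "real K * c \<le> real (card (F - G\<^sub>1))"
        using less.hyps[of "F - G\<^sub>1"] less.prems by (metis Diff_subset order_trans)
      define b' G' where "b' = b(Suc K := b\<^sub>1)" and "G' = G(Suc K := G\<^sub>1)"
      have "(\<Union>i\<in>{0..Suc K}. G' i) = F" "disjoint_family_on G' {0..Suc K}"
        using indexed_partition_extend[OF IH(1,2) G\<^sub>1(1)] by (simp_all add: G'_def)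
      moreover have "Q (G' 0)" using IH(3) by (simp add: G'_def)
      moreover have "\<forall>i\<in>{1..Suc K}. P (b' i) (G' i)" using IH(4) G\<^sub>1(2) by (auto simp: b'_def G'_def)
      moreover have "real (Suc K) * c \<le> real (card F)"
      proof -
        have "card F = card (F - G\<^sub>1) + card G\<^sub>1"
          using \<open>finite F\<close> G\<^sub>1(1) by (metis card_Diff_subset card_mono finite_subset le_add_diff_inverse2)
        then show ?thesis using IH(5) G\<^sub>1(3) by (simp add: algebra_simps)
      qed
      ultimately show ?thesis by (metis (no_types))
    qed
  qed
  from this[OF subset_refl] show ?thesis .
qed

lemma regularity_exponent_bounds:
  fixes \<epsilon> :: real
  assumes "0 < \<epsilon>" "\<epsilon> < 1/12"
  shows "0 < \<epsilon>\<^sup>2 / (10 * ln (1 / \<epsilon>))" "2 * (\<epsilon>\<^sup>2 / (10 * ln (1 / \<epsilon>))) * (1 + ln (1 / \<epsilon>)) \<le> \<epsilon>\<^sup>2"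
proof -
  define L where "L = ln (1 / \<epsilon>)"
  have "ln \<epsilon> \<le> \<epsilon> - 1" using ln_le_minus_one assms(1) by blast
  then have "1/4 \<le> L" using assms by (simp add: L_def ln_div)
  then show "0 < \<epsilon>\<^sup>2 / (10 * ln (1 / \<epsilon>))" using assms(1) by (simp add: L_def[symmetric])
  have "2 * (\<epsilon>\<^sup>2 / (10 * L)) * (1 + L) = \<epsilon>\<^sup>2 * ((2 + 2 * L) / (10 * L))"
    using \<open>1/4 \<le> L\<close> by (simp add: field_simps)
  also have "\<dots> \<le> \<epsilon>\<^sup>2 * 1"
    using \<open>1/4 \<le> L\<close> by (intro mult_left_mono) auto
  finally show "2 * (\<epsilon>\<^sup>2 / (10 * ln (1 / \<epsilon>))) * (1 + ln (1 / \<epsilon>)) \<le> \<epsilon>\<^sup>2"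
    by (simp add: L_def)
qed

lemma exists_super_regular_decomposition:
  fixes m :: real
  assumes "finite A" "finite B" "card A = N" "card B = N" "0 < N" "E \<subseteq> A \<times> B"
    and "0 < \<epsilon>" "\<epsilon> < 1" "0 < \<gamma>" "2 * \<gamma> * (1 + ln (1 / \<epsilon>)) \<le> \<epsilon>\<^sup>2" "0 < d"
  defines "m \<equiv> d powr (1 / \<gamma>) * N"
  obtains K X Y G where "(\<Union>i\<in>{0..K}. G i) = E" "disjoint_family_on G {0..K}"
    "\<forall>i\<in>{0..K}. balanced_bip_subgraph (X i) (Y i) (G i) A B E"
    "\<forall>i\<in>{1..K}. super_regular \<epsilon> (d - \<epsilon>) (X i) (Y i) (G i) \<and> d \<le> bip_density (X i) (Y i) (G i)
        \<and> m \<le> card (X i) \<and> m \<le> card (Y i)"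
    "bip_density (X 0) (Y 0) (G 0) < d" "real K * (d * (d powr (1 / \<gamma>))\<^sup>2) \<le> bip_density A B E"
proof -
  define P where "P = (\<lambda>XY G. balanced_bip_subgraph (fst XY) (snd XY) G A B E
    \<and> super_regular \<epsilon> (d - \<epsilon>) (fst XY) (snd XY) G \<and> d \<le> bip_density (fst XY) (snd XY) G
    \<and> m \<le> card (fst XY) \<and> m \<le> card (snd XY))"
  have "finite E" using assms(1,2,6) finite_subset by blast
  have "0 < m" using assms(5,11) by (simp add: m_def)
  have "\<exists>XY G. G \<subseteq> F \<and> P XY G \<and> d * m\<^sup>2 \<le> real (card G)"
    if "F \<subseteq> E" "\<not> bip_density A B F < d" for F
  proof -
    have "d \<le> bip_density A B F" using that(2) by simp
    then obtain X Y where XY: "X \<subseteq> A" "Y \<subseteq> B" "card X = card Y" "m \<le> card X"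
        "d \<le> bip_density X Y (F \<inter> X \<times> Y)" "super_regular \<epsilon> (d - \<epsilon>) X Y (F \<inter> X \<times> Y)"
        "d * m\<^sup>2 \<le> card (F \<inter> X \<times> Y)"
      using exists_super_regular_pair[OF assms(1-4,7-11)] unfolding m_def by metis
    moreover have "P (X, Y) (F \<inter> X \<times> Y)"
      using XY that(1) by (auto simp: P_def balanced_bip_subgraph_def)
    ultimately show ?thesis by blast
  qed
  then obtain K b G where G: "(\<Union>i\<in>{0..K}. G i) = E" "disjoint_family_on G {0..K}"
      "bip_density A B (G 0) < d" "\<forall>i\<in>{1..K}. P (b i) (G i)" "real K * (d * m\<^sup>2) \<le> card E"
    using greedy_indexed_partition[OF \<open>finite E\<close>, of "d * m\<^sup>2" "\<lambda>G. bip_density A B G < d" P]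
      \<open>0 < m\<close> assms(11) by (metis zero_less_power mult_pos_pos)
  define X Y where "X i = (if i = 0 then A else fst (b i))" and "Y i = (if i = 0 then B else snd (b i))"
    for i
  have "\<forall>i\<in>{0..K}. balanced_bip_subgraph (X i) (Y i) (G i) A B E"
  proof
    fix i assume "i \<in> {0..K}"
    then have "G i \<subseteq> E" using G(1) by auto
    then show "balanced_bip_subgraph (X i) (Y i) (G i) A B E"
      using G(4) assms(3,4,6) \<open>i \<in> {0..K}\<close> by (auto simp: X_def Y_def P_def balanced_bip_subgraph_def)
  qed
  moreover have "\<forall>i\<in>{1..K}. super_regular \<epsilon> (d - \<epsilon>) (X i) (Y i) (G i) \<and> d \<le> bip_density (X i) (Y i) (G i)
        \<and> m \<le> card (X i) \<and> m \<le> card (Y i)"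
    using G(4) by (auto simp: X_def Y_def P_def)
  moreover have "bip_density (X 0) (Y 0) (G 0) < d"
    using G(3) by (simp add: X_def Y_def)
  moreover have "real K * (d * (d powr (1 / \<gamma>))\<^sup>2) \<le> bip_density A B E"
  proof -
    have "real (card E) = bip_density A B E * N\<^sup>2"
      using assms(3-6) by (simp add: bip_density_def Int_absorb2 power2_eq_square)
    then have "real K * (d * (d powr (1 / \<gamma>))\<^sup>2) * N\<^sup>2 \<le> bip_density A B E * N\<^sup>2"
      using G(5) by (simp add: m_def power_mult_distrib mult.assoc)
    then show ?thesis using assms(5) by simp
  qed
  ultimately show ?thesis by (rule that[OF G(1,2)])
qed

theorem theorem2p5:
  fixes A B :: "'a set" and E :: "('a \<times> 'a) set" and d \<epsilon> :: real and n :: nat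
  assumes "0 < d" "d \<le> 1" "0 < \<epsilon>" "\<epsilon> < 1/12"
    and "finite A" "finite B" "A \<inter> B = {}" "E \<subseteq> A \<times> B"
    and "card A = card B"
    and "n = card A + card B"
    and "real n > exp (10 * ln (1/d) * ln (1/\<epsilon>) / \<epsilon>^2)"
  shows "\<exists>K::nat. \<exists>X Y :: nat \<Rightarrow> 'a set. \<exists>F :: nat \<Rightarrow> ('a \<times> 'a) set.
     (\<Union>i\<in>{0..K}. F i) = E \<and>
     (\<forall>i\<in>{0..K}. \<forall>j\<in>{0..K}. i \<noteq> j \<longrightarrow> F i \<inter> F j = {}) \<and>
     (\<forall>i\<in>{0..K}. balanced_bip_subgraph (X i) (Y i) (F i) A B E) \<and>
     (\<forall>i\<in>{1..K}. super_regular \<epsilon> (d - \<epsilon>) (X i) (Y i) (F i) \<and>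
        bip_density (X i) (Y i) (F i) \<ge> d \<and>
        real (card (X i)) \<ge> d powr ((10 / \<epsilon>^2) * ln (1/\<epsilon>)) * real n / 2 \<and>
        real (card (Y i)) \<ge> d powr ((10 / \<epsilon>^2) * ln (1/\<epsilon>)) * real n / 2) \<and>
     bip_density (X 0) (Y 0) (F 0) < d \<and>
     real K \<le> 2 * bip_density A B E * d powr (- (20 / \<epsilon>^2) * ln (1/\<epsilon>)) / d"
proof -
  define \<gamma> where "\<gamma> = \<epsilon>\<^sup>2 / (10 * ln (1 / \<epsilon>))"
  have \<gamma>: "0 < \<gamma>" "2 * \<gamma> * (1 + ln (1 / \<epsilon>)) \<le> \<epsilon>\<^sup>2"
    using regularity_exponent_bounds[OF assms(3,4)] by (simp_all add: \<gamma>_def)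
  have "0 < exp (10 * ln (1/d) * ln (1/\<epsilon>) / \<epsilon>^2)" by simp
  (* The lower bound on n is only needed to make the graph nonempty. *)
  then have "0 < real n" using assms(11) by linarith
  then have "0 < card A" using assms(9,10) by simp
  obtain K X Y G where D: "(\<Union>i\<in>{0..K}. G i) = E" "disjoint_family_on G {0..K}"
    "\<forall>i\<in>{0..K}. balanced_bip_subgraph (X i) (Y i) (G i) A B E"
    "\<forall>i\<in>{1..K}. super_regular \<epsilon> (d - \<epsilon>) (X i) (Y i) (G i) \<and> d \<le> bip_density (X i) (Y i) (G i)
        \<and> d powr (1 / \<gamma>) * card A \<le> card (X i) \<and> d powr (1 / \<gamma>) * card A \<le> card (Y i)"
    "bip_density (X 0) (Y 0) (G 0) < d" "real K * (d * (d powr (1 / \<gamma>))\<^sup>2) \<le> bip_density A B E"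
    using assms(4) by (rule_tac exists_super_regular_decomposition[OF assms(5,6) refl assms(9)[symmetric]
          \<open>0 < card A\<close> assms(8,3) _ \<gamma> assms(1)]) auto
  have exponent: "(10 / \<epsilon>\<^sup>2) * ln (1 / \<epsilon>) = 1 / \<gamma>" by (simp add: \<gamma>_def)
  have "- (20 / \<epsilon>\<^sup>2) * ln (1 / \<epsilon>) = - ((10 / \<epsilon>\<^sup>2) * ln (1 / \<epsilon>) + (10 / \<epsilon>\<^sup>2) * ln (1 / \<epsilon>))"
    by (simp add: field_simps)
  then have powr_eq: "d powr (- (20 / \<epsilon>\<^sup>2) * ln (1 / \<epsilon>)) = inverse (d powr (1 / \<gamma>) * d powr (1 / \<gamma>))"
    by (simp only: exponent powr_minus powr_add)
  have "real K \<le> bip_density A B E / (d * (d powr (1 / \<gamma>))\<^sup>2)"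
    using D(6) assms(1) by (simp add: pos_le_divide_eq)
  also have "\<dots> = bip_density A B E * d powr (- (20 / \<epsilon>\<^sup>2) * ln (1 / \<epsilon>)) / d"
    unfolding powr_eq by (simp add: divide_inverse power2_eq_square inverse_mult_distrib mult_ac)
  finally have "real K \<le> bip_density A B E * d powr (- (20 / \<epsilon>\<^sup>2) * ln (1 / \<epsilon>)) / d" .
  moreover have "0 \<le> bip_density A B E * d powr (- (20 / \<epsilon>\<^sup>2) * ln (1 / \<epsilon>)) / d"
    using bip_density_nonneg[of A B E] assms(1) by simp
  moreover have "d powr ((10 / \<epsilon>\<^sup>2) * ln (1 / \<epsilon>)) * real n / 2 = d powr (1 / \<gamma>) * card A"
    using assms(9,10) unfolding exponent by simp
  ultimately show ?thesis
    using D unfolding disjoint_family_on_def by (intro exI[of _ K] exI[of _ X] exI[of _ Y] exI[of _ G]) simp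
qed

end
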